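(* Let $\alpha>0$ and $0\le m<s<M$, and let $f\in\mathcal{F}(m,M,s)$. Put $l=\pi(s-m)/(M-m)\in(0,\pi)$ and $\delta=m/(M-m)\ge 0$. Then $$\operatorname{osc}(u_f)\le (M-m)\,\Theta_\alpha(l,\delta).$$ Equality holds if and only if $f(x)=f_0(x)$ a.e. on $[-\pi,\pi]$ or $f(x)=f_0(-x)$ a.e. on $[-\pi,\pi]$, where $f_0=m+(M-m)\chi_{I(a_g,l)}$.
   Context: Robin problem: for $\alpha>0$ and $f\in L^1[-\pi,\pi]$, find $u\in C^1[-\pi,\pi]$ with $u'$ absolutely continuous on $[-\pi,\pi]$, $-u''=f$ a.e. on $(-\pi,\pi)$, and $-u'(-\pi)+\alpha u(-\pi)=u'(\pi)+\alpha u(\pi)=0$. It has a unique solution, denoted $u_f$; explicitly $u_f(x)=\int_{-\pi}^{\pi}G(x,y)f(y)\,dy$ with $G(x,y)=-\tfrac12 c_\alpha xy-\tfrac12|x-y|+\tfrac{1}{2c_\alpha}$, where $c_\alpha=\alpha/(1+\alpha\pi)$. For $0\le m<s<M$, $\mathcal{F}(m,M,s)$ is the set of $f\in L^1[-\pi,\pi]$ with $m\le f\le M$ on $[-\pi,\pi]$ and $\|f\|_{L^1}=2\pi s$. For a function $u$ on $[-\pi,\pi]$, $\operatorname{osc}(u)=\max_{[-\pi,\pi]}u-\min_{[-\pi,\pi]}u$. $I(a,l)=[a-l,a+l]$ and $\chi_E$ is the characteristic function of $E$. Parameters (for $l\in(0,\pi)$, $\delta\ge0$, $\alpha>0$): $a_0=\dfrac{(1+\delta)l}{(1+\alpha\pi)(\delta+2lc_\alpha-l^2c_\alpha^2)}$.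 If $(1+\delta)l>\delta(\pi-l)$, let $\alpha_0$ be the unique positive root of $$(\pi^2\delta+2\pi l-l^2)\alpha^2+\frac{2(\pi\delta+l)(\pi-l)-\pi l(1+\delta)}{\pi-l}\,\alpha+\delta-\frac{(1+\delta)l}{\pi-l}=0,$$ and set $\alpha_g=\alpha_0$. If $(1+\delta)l\le\delta(\pi-l)$, set $\alpha_g=0$. $a_g=\pi-l$ if $0<\alpha\le\alpha_g$, and $a_g=a_0$ if $\alpha>\alpha_g$. $\Theta_\alpha(l,\delta)=\dfrac12\,\dfrac{(1+\delta)l^2}{(\pi^2\delta+2\pi l-l^2)\alpha^2+2(\pi\delta+l)\alpha+\delta}+\pi l+\dfrac{\pi^2\delta}{2}-\dfrac{l^2}{2}$ if $\alpha>\alpha_g$. $\Theta_\alpha(l,\delta)=\dfrac12\,\dfrac{(l^2c_\alpha^2-2lc_\alpha-\delta)(\pi-l)^2}{1+\delta}+\dfrac{l(\pi-l)}{1+\alpha\pi}+\pi l+\dfrac{\pi^2\delta}{2}-\dfrac{l^2}{2}$ if $0<\alpha\le\alpha_g$. *)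

theory Defs
  imports "HOL-Analysis.Analysis"
begin

definition c_alpha :: "real \<Rightarrow> real" where
  "c_alpha \<alpha> = \<alpha> / (1 + \<alpha> * pi)"

definition green :: "real \<Rightarrow> real \<Rightarrow> real \<Rightarrow> real" where
  "green \<alpha> x y = - (1/2) * c_alpha \<alpha> * x * y - (1/2) * \<bar>x - y\<bar> + 1 / (2 * c_alpha \<alpha>)"

definition robin_sol :: "real \<Rightarrow> (real \<Rightarrow> real) \<Rightarrow> real \<Rightarrow> real" where
  "robin_sol \<alpha> f x = integral\<^sup>L (lebesgue_on {-pi..pi}) (\<lambda>y. green \<alpha> x y * f y)"

definition osc :: "(real \<Rightarrow> real) \<Rightarrow> real" where
  "osc u = Sup (u ` {-pi..pi}) - Inf (u ` {-pi..pi})"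

definition admissible :: "real \<Rightarrow> real \<Rightarrow> real \<Rightarrow> (real \<Rightarrow> real) \<Rightarrow> bool" where
  "admissible m M s f \<longleftrightarrow>
     integrable (lebesgue_on {-pi..pi}) f \<and>
     (AE x in lebesgue_on {-pi..pi}. m \<le> f x \<and> f x \<le> M) \<and>
     integral\<^sup>L (lebesgue_on {-pi..pi}) (\<lambda>x. \<bar>f x\<bar>) = 2 * pi * s"

definition a0 :: "real \<Rightarrow> real \<Rightarrow> real \<Rightarrow> real" where
  "a0 \<alpha> l \<delta> = (1 + \<delta>) * l /
     ((1 + \<alpha> * pi) * (\<delta> + 2 * l * c_alpha \<alpha> - l^2 * (c_alpha \<alpha>)^2))"

definition alpha0_poly :: "real \<Rightarrow> real \<Rightarrow> real \<Rightarrow> real" where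
  "alpha0_poly l \<delta> a =
     (pi^2 * \<delta> + 2 * pi * l - l^2) * a^2
     + ((2 * (pi * \<delta> + l) * (pi - l) - pi * l * (1 + \<delta>)) / (pi - l)) * a
     + \<delta> - (1 + \<delta>) * l / (pi - l)"

definition alpha0 :: "real \<Rightarrow> real \<Rightarrow> real" where
  "alpha0 l \<delta> = (THE a. a > 0 \<and> alpha0_poly l \<delta> a = 0)"

definition alpha_g :: "real \<Rightarrow> real \<Rightarrow> real" where
  "alpha_g l \<delta> = (if (1 + \<delta>) * l > \<delta> * (pi - l) then alpha0 l \<delta> else 0)"

definition a_g :: "real \<Rightarrow> real \<Rightarrow> real \<Rightarrow> real" where
  "a_g \<alpha> l \<delta> = (if \<alpha> \<le> alpha_g l \<delta> then pi - l else a0 \<alpha> l \<delta>)"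

definition Theta :: "real \<Rightarrow> real \<Rightarrow> real \<Rightarrow> real" where
  "Theta \<alpha> l \<delta> =
     (if \<alpha> > alpha_g l \<delta> then
        (1/2) * ((1 + \<delta>) * l^2 /
          ((pi^2 * \<delta> + 2 * pi * l - l^2) * \<alpha>^2 + 2 * (pi * \<delta> + l) * \<alpha> + \<delta>))
        + pi * l + pi^2 * \<delta> / 2 - l^2 / 2
      else
        (1/2) * ((l^2 * (c_alpha \<alpha>)^2 - 2 * l * c_alpha \<alpha> - \<delta>) * (pi - l)^2 / (1 + \<delta>))
        + l * (pi - l) / (1 + \<alpha> * pi) + pi * l + pi^2 * \<delta> / 2 - l^2 / 2)"

end

(*
  By the Green representation, u(x) - u(-pi) is the integral of f against the kernel
  tent x k with k = 1 - c_alpha alpha * (pi + x), which increases up to y = x and decreases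
  after it; the reflection y -> -y turns u(x) - u(pi) into the same quantity for f(-y).
  Since -u'' = f >= 0, u is concave and attains its minimum at an endpoint, so osc u is the
  largest of these rises.  For fixed x the bathtub principle bounds the rise by its value at
  m + (M - m) * indicator I, where I = [a - l, a + l] is the superlevel interval of the kernel;
  that value is (M - m) * profile x a for an explicit quadratic profile.  Completing the square
  around (x_g, a_g) shows profile x a <= Theta on the admissible centres a <= pi - l, with equality
  only at (x_g, a_g); the constraint a <= pi - l is active exactly when alpha <= alpha_g.  In the
  equality case the kernel has no level set of positive measure, which forces f = f0 a.e.
*)

theory Submission
  imports Defs
begin

section \<open>Integration over [-pi, pi] and the bathtub principle\<close>

abbreviation lebesgue_pi :: "real measure" where
  "lebesgue_pi \<equiv> lebesgue_on {-pi..pi}"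

lemma borel_measurable_lebesgue_onI:
  "(\<phi> :: real \<Rightarrow> real) \<in> borel_measurable borel \<Longrightarrow> \<phi> \<in> borel_measurable (lebesgue_on S)"
  by (intro measurable_restrict_space1 measurable_completion) simp

lemma integrable_bounded_mult:
  fixes f \<phi> :: "'a \<Rightarrow> real"
  assumes f: "integrable N f" and \<phi>: "\<phi> \<in> borel_measurable N"
    and bound: "\<And>y. y \<in> space N \<Longrightarrow> \<bar>\<phi> y\<bar> \<le> B"
  shows "integrable N (\<lambda>y. \<phi> y * f y)"
proof (rule Bochner_Integration.integrable_bound[where f = "\<lambda>y. B * f y"])
  show "integrable N (\<lambda>y. B * f y)" using f by simp
  show "(\<lambda>y. \<phi> y * f y) \<in> borel_measurable N"
    using borel_measurable_integrable[OF f] \<phi> by measurable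
  have "\<bar>\<phi> y\<bar> * \<bar>f y\<bar> \<le> \<bar>B\<bar> * \<bar>f y\<bar>" if "y \<in> space N" for y
    using bound[OF that] by (intro mult_right_mono) auto
  then show "AE y in N. norm (\<phi> y * f y) \<le> norm (B * f y)"
    by (intro AE_I2) (simp add: abs_mult)
qed

lemma integrable_continuous_mult:
  fixes f \<phi> :: "real \<Rightarrow> real"
  assumes f: "integrable lebesgue_pi f" and \<phi>: "continuous_on UNIV \<phi>"
  shows "integrable lebesgue_pi (\<lambda>y. \<phi> y * f y)"
proof -
  obtain B where "\<And>y. y \<in> {-pi..pi} \<Longrightarrow> norm (\<phi> y) \<le> B"
    using continuous_on_compact_bound[OF compact_Icc continuous_on_subset[OF \<phi>]] by blast
  then show ?thesis
    using \<phi> by (intro integrable_bounded_mult[OF f] borel_measurable_lebesgue_onI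
        borel_measurable_continuous_onI) auto
qed

lemma finite_measure_lebesgue_pi: "finite_measure lebesgue_pi"
  by (intro finite_measure_lebesgue_on) (metis box_real(2) lmeasurable_cbox)

lemma integrable_lebesgue_pi_const: "integrable lebesgue_pi (\<lambda>_. c :: real)"
  by (rule finite_measure.integrable_const[OF finite_measure_lebesgue_pi])

lemma measure_lebesgue_pi: "measure lebesgue_pi {-pi..pi} = 2 * pi"
  by (simp add: measure_restrict_space)

lemma integrable_lebesgue_pi_indicator: "integrable lebesgue_pi (indicator {p..q} :: real \<Rightarrow> real)"
  using integrable_bounded_mult[of lebesgue_pi "\<lambda>_. 1" "indicator {p..q}" 1]
  by (simp add: borel_measurable_lebesgue_onI)

lemma integral_lebesgue_pi_indicator_FTC:
  fixes F \<phi> :: "real \<Rightarrow> real"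
  assumes pq: "-pi \<le> p" "p \<le> q" "q \<le> pi"
    and F: "\<And>y. p \<le> y \<Longrightarrow> y \<le> q \<Longrightarrow> (F has_real_derivative \<phi> y) (at y)"
    and \<phi>: "continuous_on UNIV \<phi>"
  shows "integral\<^sup>L lebesgue_pi (\<lambda>y. \<phi> y * indicator {p..q} y) = F q - F p"
proof -
  have [measurable]: "\<phi> \<in> borel_measurable borel"
    using \<phi> by (rule borel_measurable_continuous_onI)
  have "integral\<^sup>L lebesgue_pi (\<lambda>y. \<phi> y * indicator {p..q} y)
      = integral\<^sup>L lebesgue (\<lambda>y. indicator {-pi..pi} y *\<^sub>R (\<phi> y * indicator {p..q} y))"
    by (rule integral_restrict_space) auto
  also have "\<dots> = integral\<^sup>L lebesgue (\<lambda>y. indicator {p..q} y *\<^sub>R \<phi> y)"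
    using pq by (intro Bochner_Integration.integral_cong) (auto simp: indicator_def)
  also have "\<dots> = integral\<^sup>L lborel (\<lambda>y. indicator {p..q} y *\<^sub>R \<phi> y)"
    by (rule integral_completion) measurable
  also have "\<dots> = F q - F p"
    using F \<phi> by (intro integral_FTC_atLeastAtMost[OF pq(2)])
      (auto simp: has_real_derivative_iff_has_vector_derivative[symmetric]
         has_field_derivative_at_within intro: continuous_on_subset)
  finally show ?thesis .
qed

lemma integral_lebesgue_pi_indicator:
  "-pi \<le> p \<Longrightarrow> p \<le> q \<Longrightarrow> q \<le> pi \<Longrightarrow> integral\<^sup>L lebesgue_pi (indicator {p..q}) = q - p"
  using integral_lebesgue_pi_indicator_FTC[of p q "\<lambda>y. y" "\<lambda>_. 1"]
  by (auto intro!: derivative_eq_intros)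

lemma bathtub:
  fixes f \<phi> :: "'a \<Rightarrow> real" and m M t B :: real and A :: "'a set"
  defines "h \<equiv> \<lambda>y. m + (M - m) * indicator A y"
  assumes N: "finite_measure N" and f: "integrable N f" and f_bounds: "AE y in N. m \<le> f y \<and> f y \<le> M"
    and A: "A \<in> sets N" and mass: "integral\<^sup>L N f = integral\<^sup>L N h"
    and \<phi>: "\<phi> \<in> borel_measurable N" "\<And>y. y \<in> space N \<Longrightarrow> \<bar>\<phi> y\<bar> \<le> B"
    and above: "\<And>y. y \<in> A \<Longrightarrow> t \<le> \<phi> y" and below: "\<And>y. y \<in> space N - A \<Longrightarrow> \<phi> y \<le> t"
  shows "integral\<^sup>L N (\<lambda>y. \<phi> y * f y) \<le> integral\<^sup>L N (\<lambda>y. \<phi> y * h y)"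
    and "integral\<^sup>L N (\<lambda>y. \<phi> y * f y) = integral\<^sup>L N (\<lambda>y. \<phi> y * h y) \<Longrightarrow>
         AE y in N. \<phi> y = t \<or> f y = h y"
proof -
  interpret finite_measure N by (rule N)
  have h: "integrable N h" unfolding h_def using A by (intro integrable_const_bound[where B = "\<bar>m\<bar> + \<bar>M - m\<bar>"] AE_I2) (auto simp: indicator_def)
  have "integrable N (\<lambda>y. \<phi> y * f y)" "integrable N (\<lambda>y. \<phi> y * h y)"
    using integrable_bounded_mult[OF f \<phi>] integrable_bounded_mult[OF h \<phi>] by auto
  define g where "g y = (\<phi> y - t) * (h y - f y)" for y
  have g: "integrable N g"
    unfolding g_def left_diff_distrib right_diff_distrib
    using \<open>integrable N (\<lambda>y. \<phi> y * f y)\<close> \<open>integrable N (\<lambda>y. \<phi> y * h y)\<close> f h by auto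
  have "integral\<^sup>L N g = integral\<^sup>L N (\<lambda>y. \<phi> y * h y) - integral\<^sup>L N (\<lambda>y. \<phi> y * f y)
      - t * (integral\<^sup>L N h - integral\<^sup>L N f)"
    unfolding g_def left_diff_distrib right_diff_distrib
    using \<open>integrable N (\<lambda>y. \<phi> y * f y)\<close> \<open>integrable N (\<lambda>y. \<phi> y * h y)\<close> f h by simp
  then have int_g: "integral\<^sup>L N g = integral\<^sup>L N (\<lambda>y. \<phi> y * h y) - integral\<^sup>L N (\<lambda>y. \<phi> y * f y)"
    using mass by simp
  have g_nonneg: "AE y in N. 0 \<le> g y"
    using f_bounds AE_space
  proof eventually_elim
    case (elim y)
    show ?case
    proof (cases "y \<in> A")
      case True
      then show ?thesis using above[OF True] elim by (simp add: g_def h_def)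
    next
      case False
      then show ?thesis using below[of y] elim
        by (simp add: g_def h_def mult_nonpos_nonpos)
    qed
  qed
  show "integral\<^sup>L N (\<lambda>y. \<phi> y * f y) \<le> integral\<^sup>L N (\<lambda>y. \<phi> y * h y)"
    using integral_nonneg_AE[OF g_nonneg] int_g by simp
  assume "integral\<^sup>L N (\<lambda>y. \<phi> y * f y) = integral\<^sup>L N (\<lambda>y. \<phi> y * h y)"
  then have "AE y in N. g y = 0"
    using integral_nonneg_eq_0_iff_AE[OF g g_nonneg] int_g by simp
  then show "AE y in N. \<phi> y = t \<or> f y = h y"
    by eventually_elim (auto simp: g_def)
qed

section \<open>The tent kernel\<close>

lemma has_real_derivative_times_abs: "((\<lambda>y. y * \<bar>y\<bar>) has_real_derivative 2 * \<bar>z\<bar>) (at z)"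
proof -
  consider "z = 0" | "z > 0" | "z < 0" by linarith
  then show ?thesis
  proof cases
    case 1
    have "((\<lambda>h::real. \<bar>h\<bar>) \<longlongrightarrow> 0) (at 0)"
      using tendsto_rabs_zero[OF tendsto_ident_at[of "0::real" UNIV]] by simp
    moreover have "\<forall>\<^sub>F h in at 0. \<bar>h\<bar> = ((0 + h) * \<bar>0 + h\<bar> - 0 * \<bar>0\<bar>) / (h::real)"
      by (auto simp: eventually_at_filter)
    ultimately show ?thesis
      using 1 by (simp add: DERIV_def Lim_transform_eventually)
  next
    case 2
    have "((\<lambda>y. y * y) has_real_derivative 2 * \<bar>z\<bar>) (at z)"
      using 2 by (auto intro!: derivative_eq_intros)
    then show ?thesis
      by (rule has_field_derivative_transform_within_open[where S = "{0<..}"]) (use 2 in auto)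
  next
    case 3
    have "((\<lambda>y. - (y * y)) has_real_derivative 2 * \<bar>z\<bar>) (at z)"
      using 3 by (auto intro!: derivative_eq_intros)
    then show ?thesis
      by (rule has_field_derivative_transform_within_open[where S = "{..<0}"]) (use 3 in auto)
  qed
qed

text \<open>With \<open>k = 1 - c_alpha \<alpha> * (pi + x)\<close>, \<open>tent x k y\<close> is \<open>green \<alpha> x y - green \<alpha> (-pi) y\<close>.\<close>

definition tent :: "real \<Rightarrow> real \<Rightarrow> real \<Rightarrow> real" where
  "tent x k y = pi/2 - \<bar>x - y\<bar>/2 + k*y/2"

lemma continuous_on_tent: "continuous_on UNIV (tent x k)"
  unfolding tent_def by (intro continuous_intros) auto

lemma borel_measurable_tent [measurable]: "tent x k \<in> borel_measurable borel"
  using continuous_on_tent by (rule borel_measurable_continuous_onI)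

lemma abs_tent_le:
  assumes "x \<in> {-pi..pi}" "y \<in> {-pi..pi}"
  shows "\<bar>tent x k y\<bar> \<le> (3 + \<bar>k\<bar>) * pi / 2"
proof -
  have "\<bar>k * y\<bar> \<le> \<bar>k\<bar> * pi" using assms by (auto simp: abs_mult intro!: mult_left_mono)
  moreover have "\<bar>x - y\<bar> \<le> 2 * pi" using assms by auto
  ultimately show ?thesis
    unfolding tent_def distrib_right by (intro abs_leI) (use pi_gt_zero in \<open>auto simp: abs_le_iff\<close>)
qed

lemma tent_mono_below:
  assumes "y1 \<le> y2" "y2 \<le> x" "\<bar>k\<bar> \<le> 1"
  shows "tent x k y1 \<le> tent x k y2"
proof -
  have "tent x k y2 - tent x k y1 = (1 + k) * (y2 - y1) / 2"
    using assms by (simp add: tent_def abs_of_nonneg field_simps)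
  moreover have "0 \<le> (1 + k) * (y2 - y1)"
    using assms by (intro mult_nonneg_nonneg) (auto simp: abs_le_iff)
  ultimately show ?thesis by simp
qed

lemma tent_antimono_above:
  assumes "x \<le> y1" "y1 \<le> y2" "\<bar>k\<bar> \<le> 1"
  shows "tent x k y2 \<le> tent x k y1"
proof -
  have "tent x k y1 - tent x k y2 = (1 - k) * (y2 - y1) / 2"
    using assms by (simp add: tent_def abs_of_nonpos field_simps)
  moreover have "0 \<le> (1 - k) * (y2 - y1)"
    using assms by (intro mult_nonneg_nonneg) (auto simp: abs_le_iff)
  ultimately show ?thesis by simp
qed

lemma tent_superlevel_interval:
  assumes x: "x \<in> {-pi..pi}" and l: "0 < l" "l < pi" and k: "\<bar>k\<bar> \<le> 1"
  obtains a t where "-pi + l \<le> a" "a \<le> pi - l" "\<bar>x - a\<bar> \<le> l"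
    and "\<And>y. y \<in> {a - l..a + l} \<Longrightarrow> t \<le> tent x k y"
    and "\<And>y. y \<in> {-pi..pi} - {a - l..a + l} \<Longrightarrow> tent x k y \<le> t"
proof -
  have balance: "tent x k (a + l) - tent x k (a - l) = (x - a) + k * l" if "\<bar>x - a\<bar> \<le> l" for a
    using that by (simp add: tent_def abs_of_nonneg abs_of_nonpos field_simps)
  \<comment> \<open>the centre where \<open>tent x k (a - l) = tent x k (a + l)\<close>, clamped to the admissible range\<close>
  define a where "a = max (-pi + l) (min (pi - l) (x + k * l))"
  define t where "t = min (tent x k (a - l)) (tent x k (a + l))"
  have "\<bar>k * l\<bar> \<le> l" using k l by (simp add: abs_mult mult_left_le_one_le)
  then have kl: "-l \<le> k * l" "k * l \<le> l" by (simp_all add: abs_le_iff)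
  have a_range: "-pi + l \<le> a" "a \<le> pi - l" using l by (auto simp: a_def)
  have "x - l \<le> min (pi - l) (x + k * l)" "-pi + l \<le> x + l"
    using x kl by auto
  then have xa: "\<bar>x - a\<bar> \<le> l" using kl unfolding a_def abs_le_iff by linarith
  have inside: "t \<le> tent x k y" if y: "y \<in> {a - l..a + l}" for y
  proof (cases "y \<le> x")
    case True
    then show ?thesis using y k tent_mono_below[of "a - l" y x k] by (simp add: t_def)
  next
    case False
    then show ?thesis using y k tent_antimono_above[of x y "a + l" k] by (simp add: t_def)
  qed
  have outside: "tent x k y \<le> t" if y: "y \<in> {-pi..pi} - {a - l..a + l}" for y
  proof (cases "y < a - l")
    case True
    then have "a \<le> x + k * l" using y by (auto simp: a_def)
    then have "t = tent x k (a - l)" using balance[OF xa] by (simp add: t_def)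
    then show ?thesis using True xa k tent_mono_below[of y "a - l" x k] by simp
  next
    case False
    then have "a + l < y" using y by auto
    moreover from this have "x + k * l \<le> a" using y by (auto simp: a_def)
    then have "t = tent x k (a + l)" using balance[OF xa] by (simp add: t_def)
    ultimately show ?thesis using xa k tent_antimono_above[of x "a + l" y k] by simp
  qed
  show ?thesis using that[OF a_range xa inside outside] .
qed

lemma AE_tent_neq:
  assumes "\<bar>k\<bar> < 1"
  shows "AE y in lebesgue_pi. tent x k y \<noteq> t"
proof -
  define F where "F = {(2 * t - pi + x) / (1 + k), (2 * t - pi - x) / (k - 1)}"
  have k: "1 + k \<noteq> 0" "k - 1 \<noteq> 0" using assms by auto
  have "y \<in> F" if "tent x k y = t" for y
  proof (cases "y \<le> x")
    case True
    then have "y * (1 + k) = 2 * t - pi + x" using that by (simp add: tent_def field_simps)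
    then show ?thesis using k by (simp add: F_def eq_divide_eq)
  next
    case False
    then have "y * (k - 1) = 2 * t - pi - x" using that by (simp add: tent_def field_simps)
    then show ?thesis using k by (simp add: F_def eq_divide_eq)
  qed
  moreover have "AE y in lebesgue_pi. y \<notin> F"
  proof -
    have "F \<in> null_sets lborel" unfolding F_def by (rule finite_imp_null_set_lborel) simp
    then have "AE y in lebesgue. y \<notin> F" by (intro AE_completion AE_not_in)
    then show ?thesis by (subst AE_restrict_space_iff) (auto elim: eventually_mono)
  qed
  ultimately show ?thesis by (auto elim: eventually_mono)
qed

lemma integral_tent_indicator:
  assumes "-pi \<le> p" "p \<le> q" "q \<le> pi"
  shows "integral\<^sup>L lebesgue_pi (\<lambda>y. tent x k y * indicator {p..q} y)
       = (q - p) * pi / 2 - ((q - x) * \<bar>q - x\<bar> - (p - x) * \<bar>p - x\<bar>) / 4 + k * (q\<^sup>2 - p\<^sup>2) / 4"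
proof -
  define F where "F y = pi * y / 2 - (y - x) * \<bar>y - x\<bar> / 4 + k * y\<^sup>2 / 4" for y
  have "(F has_real_derivative tent x k y) (at y)" for y
  proof -
    have "((\<lambda>y. y - x) has_real_derivative 1) (at y)" by (auto intro!: derivative_eq_intros)
    from DERIV_chain2[OF has_real_derivative_times_abs this]
    have abs_part: "((\<lambda>y. (y - x) * \<bar>y - x\<bar>) has_real_derivative 2 * \<bar>y - x\<bar>) (at y)" by simp
    have "(F has_real_derivative pi / 2 - 2 * \<bar>y - x\<bar> / 4 + k * (2 * y) / 4) (at y)"
      unfolding F_def
      by (intro DERIV_add DERIV_diff DERIV_cdivide abs_part) (auto intro!: derivative_eq_intros)
    then show ?thesis by (simp add: tent_def abs_minus_commute)
  qed
  then have "integral\<^sup>L lebesgue_pi (\<lambda>y. tent x k y * indicator {p..q} y) = F q - F p"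
    by (intro integral_lebesgue_pi_indicator_FTC[OF assms] continuous_on_tent)
  then show ?thesis by (simp add: F_def algebra_simps power2_eq_square) argo
qed

lemma integral_tent_centered:
  assumes "\<bar>x - a\<bar> \<le> l" "-pi \<le> a - l" "a + l \<le> pi"
  shows "integral\<^sup>L lebesgue_pi (\<lambda>y. tent x k y * indicator {a - l..a + l} y)
       = l * pi - (l\<^sup>2 + (x - a)\<^sup>2) / 2 + k * l * a"
  using assms integral_tent_indicator[of "a - l" "a + l" x k]
  by (simp add: abs_of_nonneg abs_of_nonpos power2_eq_square field_simps)

lemma integral_tent:
  assumes "x \<in> {-pi..pi}"
  shows "integral\<^sup>L lebesgue_pi (tent x k) = (pi\<^sup>2 - x\<^sup>2) / 2"
proof -
  have "integral\<^sup>L lebesgue_pi (tent x k) = integral\<^sup>L lebesgue_pi (\<lambda>y. tent x k y * indicator {-pi..pi} y)"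
    by (intro Bochner_Integration.integral_cong) auto
  then show ?thesis
    using assms integral_tent_indicator[of "-pi" pi x k]
    by (simp add: abs_of_nonneg abs_of_nonpos power2_eq_square field_simps)
qed

section \<open>The Robin solution\<close>

lemma c_alpha_pos: "0 < \<alpha> \<Longrightarrow> 0 < c_alpha \<alpha>"
  by (simp add: c_alpha_def pos_add_strict)

lemma continuous_on_green: "continuous_on UNIV (green \<alpha> x)"
  unfolding green_def by (intro continuous_intros) auto

lemma integrable_green_mult:
  "integrable lebesgue_pi f \<Longrightarrow> integrable lebesgue_pi (\<lambda>y. green \<alpha> x y * f y)"
  by (rule integrable_continuous_mult[OF _ continuous_on_green])

lemma robin_sol_diff:
  assumes "integrable lebesgue_pi f"
  shows "robin_sol \<alpha> f x - robin_sol \<alpha> f z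
       = integral\<^sup>L lebesgue_pi (\<lambda>y. (green \<alpha> x y - green \<alpha> z y) * f y)"
  unfolding robin_sol_def left_diff_distrib
  using assms integrable_green_mult by (intro Bochner_Integration.integral_diff[symmetric])

lemma green_diff_left:
  "y \<in> {-pi..pi} \<Longrightarrow> green \<alpha> x y - green \<alpha> (-pi) y = tent x (1 - c_alpha \<alpha> * (pi + x)) y"
  by (simp add: green_def tent_def abs_of_nonneg field_simps)

lemma robin_sol_diff_left:
  assumes "integrable lebesgue_pi f" "x \<in> {-pi..pi}"
  shows "robin_sol \<alpha> f x - robin_sol \<alpha> f (-pi)
       = integral\<^sup>L lebesgue_pi (\<lambda>y. tent x (1 - c_alpha \<alpha> * (pi + x)) y * f y)"
  unfolding robin_sol_diff[OF assms(1)] using assms(2) green_diff_left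
  by (auto intro: Bochner_Integration.integral_cong)

lemma green_lipschitz:
  assumes "0 < \<alpha>" "y \<in> {-pi..pi}"
  shows "\<bar>green \<alpha> x y - green \<alpha> z y\<bar> \<le> (c_alpha \<alpha> * pi + 1) / 2 * \<bar>x - z\<bar>"
proof -
  define A where "A = c_alpha \<alpha> * y * (x - z)"
  define B where "B = \<bar>x - y\<bar> - \<bar>z - y\<bar>"
  have diff: "green \<alpha> x y - green \<alpha> z y = - (A / 2 + B / 2)"
    unfolding green_def A_def B_def by argo
  moreover have "\<bar>A\<bar> \<le> c_alpha \<alpha> * pi * \<bar>x - z\<bar>"
    using assms c_alpha_pos[OF assms(1)] by (auto simp: A_def abs_mult intro!: mult_right_mono)
  moreover have "\<bar>B\<bar> \<le> \<bar>x - z\<bar>" unfolding B_def by linarith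
  ultimately show ?thesis
    unfolding diff abs_minus_cancel using abs_triangle_ineq[of "A / 2" "B / 2"]
    by (simp add: field_simps)
qed

lemma continuous_on_robin_sol:
  assumes f: "integrable lebesgue_pi f" and "0 < \<alpha>"
  shows "continuous_on {-pi..pi} (robin_sol \<alpha> f)"
proof -
  define L where "L = (c_alpha \<alpha> * pi + 1) / 2 * integral\<^sup>L lebesgue_pi (\<lambda>y. \<bar>f y\<bar>)"
  have "\<bar>robin_sol \<alpha> f x - robin_sol \<alpha> f z\<bar> \<le> L * \<bar>x - z\<bar>"
    if "x \<in> {-pi..pi}" "z \<in> {-pi..pi}" for x z
  proof -
    have "integrable lebesgue_pi (\<lambda>y. (green \<alpha> x y - green \<alpha> z y) * f y)"
      using integrable_green_mult[OF f] by (simp add: left_diff_distrib)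
    have "\<bar>robin_sol \<alpha> f x - robin_sol \<alpha> f z\<bar>
        \<le> integral\<^sup>L lebesgue_pi (\<lambda>y. \<bar>(green \<alpha> x y - green \<alpha> z y) * f y\<bar>)"
      unfolding robin_sol_diff[OF f] by (rule integral_abs_bound)
    also have "\<dots> \<le> integral\<^sup>L lebesgue_pi (\<lambda>y. (c_alpha \<alpha> * pi + 1) / 2 * \<bar>x - z\<bar> * \<bar>f y\<bar>)"
    proof (intro integral_mono integrable_abs)
      fix y assume "y \<in> space lebesgue_pi"
      then have "\<bar>green \<alpha> x y - green \<alpha> z y\<bar> \<le> (c_alpha \<alpha> * pi + 1) / 2 * \<bar>x - z\<bar>"
        using green_lipschitz[OF \<open>0 < \<alpha>\<close>] by simp
      then show "\<bar>(green \<alpha> x y - green \<alpha> z y) * f y\<bar> \<le> (c_alpha \<alpha> * pi + 1) / 2 * \<bar>x - z\<bar> * \<bar>f y\<bar>"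
        unfolding abs_mult by (rule mult_right_mono) simp
    qed (use \<open>integrable lebesgue_pi (\<lambda>y. (green \<alpha> x y - green \<alpha> z y) * f y)\<close> f in auto)
    finally show ?thesis by (simp add: L_def mult_ac)
  qed
  moreover have "0 \<le> L"
    using c_alpha_pos[OF \<open>0 < \<alpha>\<close>] by (auto simp: L_def intro!: integral_nonneg_AE)
  ultimately have "L-lipschitz_on {-pi..pi} (robin_sol \<alpha> f)"
    by (intro lipschitz_onI) (auto simp: dist_real_def)
  then show ?thesis by (rule lipschitz_on_continuous_on)
qed

lemma green_endpoint_combination:
  assumes "w \<in> {-pi..pi}"
  shows "(pi - y) * (green \<alpha> y w - green \<alpha> (-pi) w) + (pi + y) * (green \<alpha> y w - green \<alpha> pi w)
       = (pi - max y w) * (pi + min y w)"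
  using assms by (cases "y \<le> w") (simp_all add: green_def abs_of_nonneg abs_of_nonpos max_def min_def
      field_simps)

text \<open>The concavity of \<open>robin_sol \<alpha> f\<close> for \<open>f \<ge> 0\<close>, in integrated form.\<close>

lemma robin_sol_endpoint_min:
  assumes f: "integrable lebesgue_pi f" "AE y in lebesgue_pi. 0 \<le> f y" and y: "y \<in> {-pi..pi}"
  shows "min (robin_sol \<alpha> f (-pi)) (robin_sol \<alpha> f pi) \<le> robin_sol \<alpha> f y"
proof -
  let ?u = "robin_sol \<alpha> f"
  have "(pi - y) * (?u y - ?u (-pi)) + (pi + y) * (?u y - ?u pi)
      = integral\<^sup>L lebesgue_pi (\<lambda>w. (pi - y) * ((green \<alpha> y w - green \<alpha> (-pi) w) * f w)
          + (pi + y) * ((green \<alpha> y w - green \<alpha> pi w) * f w))"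
    using integrable_green_mult[OF f(1)] by (simp add: robin_sol_diff[OF f(1)] left_diff_distrib)
  also have "\<dots> = integral\<^sup>L lebesgue_pi (\<lambda>w. (pi - max y w) * (pi + min y w) * f w)"
  proof (intro Bochner_Integration.integral_cong refl)
    fix w assume "w \<in> space lebesgue_pi"
    then have "(pi - y) * (green \<alpha> y w - green \<alpha> (-pi) w) + (pi + y) * (green \<alpha> y w - green \<alpha> pi w)
        = (pi - max y w) * (pi + min y w)"
      by (simp add: green_endpoint_combination)
    then show "(pi - y) * ((green \<alpha> y w - green \<alpha> (-pi) w) * f w)
        + (pi + y) * ((green \<alpha> y w - green \<alpha> pi w) * f w) = (pi - max y w) * (pi + min y w) * f w"
      by (metis distrib_right mult.assoc)
  qed
  also have "\<dots> \<ge> 0"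
  proof (intro integral_nonneg_AE)
    show "AE w in lebesgue_pi. 0 \<le> (pi - max y w) * (pi + min y w) * f w"
      using f(2) AE_space
    proof eventually_elim
      case (elim w)
      then show ?case using y by (intro mult_nonneg_nonneg) (auto simp: max_def min_def)
    qed
  qed
  finally have "0 \<le> (pi - y) * (?u y - ?u (-pi)) + (pi + y) * (?u y - ?u pi)" .
  moreover have "0 \<le> pi - y" "0 \<le> pi + y" "0 < (pi - y) + (pi + y)" using y by auto
  ultimately show ?thesis
    by (smt (verit, best) mult_nonneg_nonpos mult_pos_neg)
qed

lemma osc_robin_sol_le_iff:
  assumes f: "integrable lebesgue_pi f" "AE y in lebesgue_pi. 0 \<le> f y" and "0 < \<alpha>"
  defines "u \<equiv> robin_sol \<alpha> f"
  assumes rises: "\<forall>x\<in>{-pi..pi}. u x - u (-pi) \<le> R \<and> u x - u pi \<le> R"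
  shows "osc u \<le> R" and "osc u = R \<longleftrightarrow> (\<exists>x\<in>{-pi..pi}. u x - u (-pi) = R \<or> u x - u pi = R)"
proof -
  have cont: "continuous_on {-pi..pi} u"
    unfolding u_def using f(1) \<open>0 < \<alpha>\<close> by (rule continuous_on_robin_sol)
  obtain x1 where x1: "x1 \<in> {-pi..pi}" "\<And>y. y \<in> {-pi..pi} \<Longrightarrow> u y \<le> u x1"
    using continuous_attains_sup[OF compact_Icc _ cont] by auto
  obtain x2 where x2: "x2 \<in> {-pi..pi}" "\<And>y. y \<in> {-pi..pi} \<Longrightarrow> u x2 \<le> u y"
    using continuous_attains_inf[OF compact_Icc _ cont] by auto
  have "u x2 = min (u (-pi)) (u pi)"
    using robin_sol_endpoint_min[OF f x2(1), of \<alpha>] x2(2)[of "-pi"] x2(2)[of pi]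
    by (auto simp: u_def min_def)
  moreover have "Sup (u ` {-pi..pi}) = u x1" by (rule cSup_eq_maximum) (use x1 in auto)
  moreover have "Inf (u ` {-pi..pi}) = u x2" by (rule cInf_eq_minimum) (use x2 in auto)
  ultimately have osc: "osc u = max (u x1 - u (-pi)) (u x1 - u pi)"
    by (simp add: osc_def)
  show "osc u \<le> R" using rises x1(1) by (simp add: osc)
  show "osc u = R \<longleftrightarrow> (\<exists>x\<in>{-pi..pi}. u x - u (-pi) = R \<or> u x - u pi = R)"
  proof
    assume "osc u = R"
    then show "\<exists>x\<in>{-pi..pi}. u x - u (-pi) = R \<or> u x - u pi = R"
      using x1(1) by (intro bexI[of _ x1]) (auto simp: osc max_def)
  next
    assume "\<exists>x\<in>{-pi..pi}. u x - u (-pi) = R \<or> u x - u pi = R"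
    then obtain x where "x \<in> {-pi..pi}" "u x - u (-pi) = R \<or> u x - u pi = R" by blast
    then have "R \<le> osc u" using x1(2)[of x] by (auto simp: osc)
    then show "osc u = R" using \<open>osc u \<le> R\<close> by simp
  qed
qed

lemma AE_lebesgue_pi_reflect:
  assumes "AE y in lebesgue_pi. P y"
  shows "AE y in lebesgue_pi. P (- y)"
proof -
  have "AE y in lborel. y \<in> {-pi..pi} \<longrightarrow> P y"
    using assms by (simp add: AE_restrict_space_iff AE_completion_iff)
  then have "AE y in distr lborel borel uminus. y \<in> {-pi..pi} \<longrightarrow> P y"
    unfolding lborel_distr_uminus .
  then have "AE y in lborel. - y \<in> {-pi..pi} \<longrightarrow> P (- y)"
    by (rule AE_distrD[rotated]) simp
  then show ?thesis
    by (simp add: AE_restrict_space_iff AE_completion_iff) (auto elim: eventually_mono)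
qed

lemma AE_lebesgue_pi_reflect_iff:
  "(AE y in lebesgue_pi. f (- y) = h y) \<longleftrightarrow> (AE y in lebesgue_pi. f y = h (- y))"
proof
  assume "AE y in lebesgue_pi. f (- y) = h y"
  from AE_lebesgue_pi_reflect[OF this] show "AE y in lebesgue_pi. f y = h (- y)" by simp
next
  assume "AE y in lebesgue_pi. f y = h (- y)"
  from AE_lebesgue_pi_reflect[OF this] show "AE y in lebesgue_pi. f (- y) = h y" by simp
qed

lemma robin_sol_reflect: "robin_sol \<alpha> (\<lambda>y. f (- y)) x = robin_sol \<alpha> f (- x)"
proof -
  have "green \<alpha> x y = green \<alpha> (- x) (- y)" for y
    by (simp add: green_def abs_minus_commute)
  then have "robin_sol \<alpha> (\<lambda>y. f (- y)) x
      = integral\<^sup>L (lebesgue_on {- pi..- (- pi)}) (\<lambda>y. green \<alpha> (- x) (- y) * f (- y))"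
    by (simp add: robin_sol_def)
  also have "\<dots> = robin_sol \<alpha> f (- x)"
    using integral_reflect_real[of pi "-pi" "\<lambda>y. green \<alpha> (- x) y * f y"] by (simp add: robin_sol_def)
  finally show ?thesis .
qed

lemma admissible_reflect: "admissible m M s f \<Longrightarrow> admissible m M s (\<lambda>y. f (- y))"
  using integrable_reflect_real[of pi "-pi" f] integral_reflect_real[of pi "-pi" "\<lambda>y. \<bar>f y\<bar>"]
    AE_lebesgue_pi_reflect[of "\<lambda>y. m \<le> f y \<and> f y \<le> M"]
  by (simp add: admissible_def)

section \<open>Maximising the profile\<close>

lemma quadratic_positive_root:
  fixes A B C :: real
  assumes A: "0 < A" and C: "C < 0"
  obtains r where "0 < r" "A * r\<^sup>2 + B * r + C = 0"
    and "\<And>a. 0 < a \<Longrightarrow> 0 < A * a\<^sup>2 + B * a + C \<longleftrightarrow> r < a"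
    and "\<And>a. 0 < a \<Longrightarrow> A * a\<^sup>2 + B * a + C = 0 \<longleftrightarrow> a = r"
proof -
  define s where "s = sqrt (B\<^sup>2 - 4 * A * C)"
  define r where "r = (s - B) / (2 * A)"
  have "0 < - (4 * A * C)" using A C by (simp add: mult_pos_neg)
  then have disc: "B\<^sup>2 < B\<^sup>2 - 4 * A * C" by simp
  moreover have "0 \<le> B\<^sup>2" by simp
  ultimately have s2: "s\<^sup>2 = B\<^sup>2 - 4 * A * C" unfolding s_def by (intro real_sqrt_pow2) linarith
  have "\<bar>B\<bar> < s" using real_sqrt_less_mono[OF disc] by (simp add: s_def)
  then have r_pos: "0 < r" using A by (simp add: r_def abs_less_iff)
  have "s = 2 * A * r + B" using A by (simp add: r_def)
  then have "4 * A * (A * r\<^sup>2 + B * r + C) = s\<^sup>2 - B\<^sup>2 + 4 * A * C"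
    by (simp add: algebra_simps power2_eq_square)
  then have root: "A * r\<^sup>2 + B * r + C = 0" using s2 A by simp
  have factor: "A * a\<^sup>2 + B * a + C = (a - r) * (A * (a + r) + B)" for a
    using root by (simp add: algebra_simps power2_eq_square)
  have "r * (A * r + B) = - C" using root by (simp add: algebra_simps power2_eq_square)
  then have "0 < A * r + B" using r_pos C zero_less_mult_pos[of r "A * r + B"] by simp
  then have pos: "0 < A * (a + r) + B" if "0 < a" for a
    using mult_pos_pos[OF A that] by (simp add: distrib_left)
  show ?thesis
  proof (rule that[OF r_pos root])
    fix a :: real assume "0 < a"
    with pos[OF this] show "0 < A * a\<^sup>2 + B * a + C \<longleftrightarrow> r < a" "A * a\<^sup>2 + B * a + C = 0 \<longleftrightarrow> a = r"
      by (auto simp: factor zero_less_mult_iff)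
  qed
qed

lemma positive_definite_quadratic:
  fixes d e p q :: real
  assumes "e\<^sup>2 < 1 + d"
  shows "0 \<le> (1 + d) * p\<^sup>2 - 2 * e * p * q + q\<^sup>2"
    and "(1 + d) * p\<^sup>2 - 2 * e * p * q + q\<^sup>2 = 0 \<Longrightarrow> p = 0 \<and> q = 0"
proof -
  have sos: "(1 + d) * p\<^sup>2 - 2 * e * p * q + q\<^sup>2 = (q - e * p)\<^sup>2 + (1 + d - e\<^sup>2) * p\<^sup>2"
    by (simp add: algebra_simps power2_eq_square)
  show "0 \<le> (1 + d) * p\<^sup>2 - 2 * e * p * q + q\<^sup>2" unfolding sos using assms by simp
  assume "(1 + d) * p\<^sup>2 - 2 * e * p * q + q\<^sup>2 = 0"
  then have "(1 + d - e\<^sup>2) * p\<^sup>2 = 0" "(q - e * p)\<^sup>2 = 0"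
    unfolding sos using assms by (smt (verit) mult_nonneg_nonneg zero_le_power2)+
  then show "p = 0 \<and> q = 0" using assms by simp
qed

locale theta_params =
  fixes \<alpha> l \<delta> :: real
  assumes \<alpha>_pos: "0 < \<alpha>" and l_pos: "0 < l" and l_less_pi: "l < pi" and \<delta>_nonneg: "0 \<le> \<delta>"
begin

abbreviation "c \<equiv> c_alpha \<alpha>"

definition "D = \<delta> + 2 * c * l - c\<^sup>2 * l\<^sup>2"
definition "g = a_g \<alpha> l \<delta>"
definition "xg = g * (1 - c * l) / (1 + \<delta>)"

text \<open>\<open>(M - m) * profile x a\<close> is \<open>u(x) - u(-pi)\<close> for \<open>f = m + (M - m) * indicator {a - l..a + l}\<close>,
  where \<open>\<delta> = m / (M - m)\<close>.\<close>

definition "profile x a = pi\<^sup>2 * \<delta> / 2 - \<delta> * x\<^sup>2 / 2 + pi * l - (l\<^sup>2 + (x - a)\<^sup>2) / 2 + (1 - c * (pi + x)) * l * a"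

lemma c_pos: "0 < c"
  using \<alpha>_pos by (rule c_alpha_pos)

lemma one_plus_\<alpha>_pi_pos: "0 < 1 + \<alpha> * pi"
  using \<alpha>_pos by (simp add: add_pos_pos)

lemma one_plus_\<delta>_pos: "0 < 1 + \<delta>"
  using \<delta>_nonneg by simp

lemma one_minus_c_pi: "1 - c * pi = 1 / (1 + \<alpha> * pi)"
  using one_plus_\<alpha>_pi_pos by (simp add: c_alpha_def field_simps)

lemma c_pi_less_1: "c * pi < 1"
  using one_minus_c_pi one_plus_\<alpha>_pi_pos by (smt (verit) divide_pos_pos)

lemma c_l_less_1: "c * l < 1"
  using mult_strict_left_mono[OF l_less_pi c_pos] c_pi_less_1 by (simp add: mult.commute)

lemma D_eq: "D = 1 + \<delta> - (1 - c * l)\<^sup>2"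
  by (simp add: D_def algebra_simps power2_eq_square)

lemma D_ge: "\<delta> + c * l \<le> D"
  using c_pos l_pos c_l_less_1 mult_left_le_one_le[of "c * l" "c * l"]
  by (simp add: D_def power2_eq_square algebra_simps)

lemma D_pos: "0 < D"
  using D_ge c_pos l_pos \<delta>_nonneg by (smt (verit) mult_pos_pos)

lemma a0_eq': "a0 \<alpha> l \<delta> = l * (1 + \<delta>) / ((1 + \<alpha> * pi) * D)"
  by (simp add: a0_def D_def mult_ac)

lemma a0_eq: "a0 \<alpha> l \<delta> = (1 - c * pi) * l * (1 + \<delta>) / D"
  by (simp add: a0_eq' one_minus_c_pi)

lemma theta_denominator:
  "(pi\<^sup>2 * \<delta> + 2 * pi * l - l\<^sup>2) * \<alpha>\<^sup>2 + 2 * (pi * \<delta> + l) * \<alpha> + \<delta> = (1 + \<alpha> * pi)\<^sup>2 * D"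
proof -
  have c: "c * (1 + \<alpha> * pi) = \<alpha>" using one_plus_\<alpha>_pi_pos by (simp add: c_alpha_def)
  have "(1 + \<alpha> * pi)\<^sup>2 * D
      = \<delta> * (1 + \<alpha> * pi)\<^sup>2 + 2 * l * (c * (1 + \<alpha> * pi)) * (1 + \<alpha> * pi) - l\<^sup>2 * (c * (1 + \<alpha> * pi))\<^sup>2"
    by (simp add: D_def algebra_simps power2_eq_square)
  then show ?thesis
    unfolding c by (simp add: algebra_simps power2_eq_square)
qed

lemma alpha0_poly_eq:
  "(pi - l) * alpha0_poly l \<delta> \<alpha> = (1 + \<alpha> * pi) * ((pi - l) * (1 + \<alpha> * pi) * D - l * (1 + \<delta>))"
proof -
  define B where "B = 2 * (pi * \<delta> + l) * (pi - l) - pi * l * (1 + \<delta>)"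
  have cancel: "(pi - l) * (B / (pi - l)) = B" "(pi - l) * ((1 + \<delta>) * l / (pi - l)) = (1 + \<delta>) * l"
    using l_less_pi by simp_all
  have "(pi - l) * alpha0_poly l \<delta> \<alpha>
      = (pi - l) * ((pi\<^sup>2 * \<delta> + 2 * pi * l - l\<^sup>2) * \<alpha>\<^sup>2 + \<delta>)
        + (pi - l) * (B / (pi - l)) * \<alpha> - (pi - l) * ((1 + \<delta>) * l / (pi - l))"
    unfolding alpha0_poly_def B_def[symmetric] by (simp add: algebra_simps)
  also have "\<dots> = (pi - l) * ((pi\<^sup>2 * \<delta> + 2 * pi * l - l\<^sup>2) * \<alpha>\<^sup>2 + 2 * (pi * \<delta> + l) * \<alpha> + \<delta>)
        - l * (1 + \<delta>) * (1 + \<alpha> * pi)"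
    unfolding cancel by (simp add: B_def algebra_simps)
  finally show ?thesis
    unfolding theta_denominator by (simp add: algebra_simps power2_eq_square)
qed

lemma alpha0_poly_pos_iff: "0 < alpha0_poly l \<delta> \<alpha> \<longleftrightarrow> a0 \<alpha> l \<delta> < pi - l"
proof -
  have "0 < alpha0_poly l \<delta> \<alpha> \<longleftrightarrow> 0 < (pi - l) * alpha0_poly l \<delta> \<alpha>"
    using l_less_pi by (simp add: zero_less_mult_iff)
  also have "\<dots> \<longleftrightarrow> l * (1 + \<delta>) < (pi - l) * ((1 + \<alpha> * pi) * D)"
    unfolding alpha0_poly_eq using one_plus_\<alpha>_pi_pos by (simp add: zero_less_mult_iff mult_ac)
  also have "\<dots> \<longleftrightarrow> a0 \<alpha> l \<delta> < pi - l"
    using one_plus_\<alpha>_pi_pos D_pos by (simp add: a0_eq' pos_divide_less_eq mult_ac)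
  finally show ?thesis .
qed

lemma alpha_g_less_iff: "alpha_g l \<delta> < \<alpha> \<longleftrightarrow> a0 \<alpha> l \<delta> < pi - l"
proof -
  define A where "A = pi\<^sup>2 * \<delta> + 2 * pi * l - l\<^sup>2"
  define B where "B = (2 * (pi * \<delta> + l) * (pi - l) - pi * l * (1 + \<delta>)) / (pi - l)"
  define C where "C = \<delta> - (1 + \<delta>) * l / (pi - l)"
  have poly: "alpha0_poly l \<delta> a = A * a\<^sup>2 + B * a + C" for a
    by (simp add: alpha0_poly_def A_def B_def C_def)
  have "0 < pi\<^sup>2 * \<delta> + l * (2 * pi - l)"
    using l_pos l_less_pi \<delta>_nonneg by (intro add_nonneg_pos) auto
  then have A_pos: "0 < A" by (simp add: A_def algebra_simps power2_eq_square)
  have "alpha_g l \<delta> < \<alpha> \<longleftrightarrow> 0 < alpha0_poly l \<delta> \<alpha>"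
  proof (cases "(1 + \<delta>) * l > \<delta> * (pi - l)")
    case True
    then have "C < 0" using l_less_pi by (simp add: C_def field_simps)
    then obtain r where "0 < r" "A * r\<^sup>2 + B * r + C = 0"
      and sign: "\<And>a. 0 < a \<Longrightarrow> 0 < A * a\<^sup>2 + B * a + C \<longleftrightarrow> r < a"
      and unique: "\<And>a. 0 < a \<Longrightarrow> A * a\<^sup>2 + B * a + C = 0 \<longleftrightarrow> a = r"
      using quadratic_positive_root[OF A_pos] by metis
    then have "alpha0 l \<delta> = r"
      unfolding alpha0_def poly by (intro the_equality) auto
    then show ?thesis using True sign[OF \<alpha>_pos] by (simp add: alpha_g_def poly)
  next
    case False
    then have "0 \<le> C" using l_less_pi by (simp add: C_def field_simps)
    have "pi * ((1 + \<delta>) * l) \<le> pi * (\<delta> * (pi - l))"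
      using False by (intro mult_left_mono) auto
    moreover have "0 < (pi - l) * (pi * \<delta> + 2 * l)"
      using l_pos l_less_pi \<delta>_nonneg by (intro mult_pos_pos add_nonneg_pos) auto
    ultimately have "0 < 2 * (pi * \<delta> + l) * (pi - l) - pi * l * (1 + \<delta>)"
      by (simp add: algebra_simps)
    then have "0 < B" using l_less_pi by (simp add: B_def)
    then have "0 < A * \<alpha>\<^sup>2 + B * \<alpha> + C"
      using A_pos \<open>0 \<le> C\<close> \<alpha>_pos by (intro add_pos_nonneg add_pos_pos mult_pos_pos) auto
    then show ?thesis using False \<alpha>_pos by (simp add: alpha_g_def poly)
  qed
  then show ?thesis by (simp add: alpha0_poly_pos_iff)
qed

lemma g_le_a0: "g \<le> a0 \<alpha> l \<delta>" and g_le: "g \<le> pi - l"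
  using alpha_g_less_iff by (auto simp: g_def a_g_def)

lemma a0_pos: "0 < a0 \<alpha> l \<delta>"
  using one_plus_\<alpha>_pi_pos D_pos l_pos \<delta>_nonneg by (simp add: a0_eq')

lemma g_pos: "0 < g"
  using a0_pos l_less_pi by (auto simp: g_def a_g_def)

lemma g_D_le: "g * D \<le> (1 - c * pi) * l * (1 + \<delta>)"
  using mult_right_mono[OF g_le_a0 less_imp_le[OF D_pos]] D_pos by (simp add: a0_eq)

lemma Theta_eq:
  "2 * (1 + \<delta>) * Theta \<alpha> l \<delta>
     = (1 + \<delta>) * (2 * pi * l + pi\<^sup>2 * \<delta> - l\<^sup>2) + 2 * (1 + \<delta>) * (1 - c * pi) * l * g - g\<^sup>2 * D"
proof (cases "alpha_g l \<delta> < \<alpha>")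
  case True
  define b where "b = 1 + \<alpha> * pi"
  have "0 < b" using one_plus_\<alpha>_pi_pos by (simp add: b_def)
  have g: "g = l * (1 + \<delta>) / (b * D)" using True by (simp add: g_def a_g_def a0_eq' b_def)
  have Theta: "Theta \<alpha> l \<delta> = (1/2) * ((1 + \<delta>) * l\<^sup>2 / (b\<^sup>2 * D)) + pi * l + pi\<^sup>2 * \<delta> / 2 - l\<^sup>2 / 2"
    unfolding Theta_def theta_denominator b_def using True by simp
  show ?thesis
    unfolding Theta g one_minus_c_pi b_def[symmetric] using \<open>0 < b\<close> D_pos
    by (simp add: field_simps power2_eq_square)
next
  case False
  then have g: "g = pi - l" by (simp add: g_def a_g_def)
  define T where "T = (1/2) * ((l\<^sup>2 * c\<^sup>2 - 2 * l * c - \<delta>) * (pi - l)\<^sup>2 / (1 + \<delta>))"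
  have "2 * (1 + \<delta>) * T = (l\<^sup>2 * c\<^sup>2 - 2 * l * c - \<delta>) * (pi - l)\<^sup>2"
    using one_plus_\<delta>_pos by (simp add: T_def)
  also have "\<dots> = - (g\<^sup>2 * D)" by (simp add: g D_def algebra_simps)
  finally have T: "2 * (1 + \<delta>) * T = - (g\<^sup>2 * D)" .
  have Theta: "Theta \<alpha> l \<delta> = T + (1 - c * pi) * l * g + (pi * l + pi\<^sup>2 * \<delta> / 2 - l\<^sup>2 / 2)"
    using False by (simp add: Theta_def T_def one_minus_c_pi g)
  have "2 * (1 + \<delta>) * Theta \<alpha> l \<delta>
      = 2 * (1 + \<delta>) * T + 2 * (1 + \<delta>) * (1 - c * pi) * l * g + (1 + \<delta>) * (2 * pi * l + pi\<^sup>2 * \<delta> - l\<^sup>2)"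
    unfolding Theta by (simp add: field_simps)
  then show ?thesis unfolding T by simp
qed

lemma profile_expansion:
  "2 * (1 + \<delta>) * (profile x a - Theta \<alpha> l \<delta>)
     = 2 * ((1 - c * pi) * l * (1 + \<delta>) - g * D) * (a - g)
       - (1 + \<delta>) * ((1 + \<delta>) * (x - xg)\<^sup>2 - 2 * (1 - c * l) * (x - xg) * (a - g) + (a - g)\<^sup>2)"
proof -
  have twice_profile: "2 * profile x a = pi\<^sup>2 * \<delta> - \<delta> * x\<^sup>2 + 2 * pi * l - l\<^sup>2 - (x - a)\<^sup>2 + 2 * (1 - c * (pi + x)) * l * a"
    by (simp add: profile_def field_simps)
  have xg: "(1 + \<delta>) * xg = g * (1 - c * l)"
    using \<delta>_nonneg by (simp add: xg_def)
  have "2 * (1 + \<delta>) * (profile x a - Theta \<alpha> l \<delta>) = (1 + \<delta>) * (2 * profile x a) - 2 * (1 + \<delta>) * Theta \<alpha> l \<delta>"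
    by (simp add: algebra_simps)
  also have "\<dots> = 2 * ((1 - c * pi) * l * (1 + \<delta>) - g * D) * (a - g)
       - (1 + \<delta>) * ((1 + \<delta>) * (x - xg)\<^sup>2 - 2 * (1 - c * l) * (x - xg) * (a - g) + (a - g)\<^sup>2)"
    unfolding twice_profile Theta_eq D_def using xg by algebra
  finally show ?thesis .
qed

lemma optimality_gap:
  assumes "a \<le> pi - l"
  shows "((1 - c * pi) * l * (1 + \<delta>) - g * D) * (a - g) \<le> 0"
proof (cases "alpha_g l \<delta> < \<alpha>")
  case True
  then have "g * D = (1 - c * pi) * l * (1 + \<delta>)" using D_pos by (simp add: g_def a_g_def a0_eq)
  then show ?thesis by simp
next
  case False
  then have "a - g \<le> 0" using assms by (simp add: g_def a_g_def)
  then show ?thesis using g_D_le by (simp add: mult_nonneg_nonpos)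
qed

lemma profile_le_Theta:
  assumes "a \<le> pi - l"
  shows "profile x a \<le> Theta \<alpha> l \<delta>" and "profile x a = Theta \<alpha> l \<delta> \<longleftrightarrow> x = xg \<and> a = g"
proof -
  define Q where "Q = (1 + \<delta>) * (x - xg)\<^sup>2 - 2 * (1 - c * l) * (x - xg) * (a - g) + (a - g)\<^sup>2"
  have definite: "(1 - c * l)\<^sup>2 < 1 + \<delta>" using D_pos by (simp add: D_eq)
  have Q: "0 \<le> Q" "Q = 0 \<Longrightarrow> x = xg \<and> a = g"
    using positive_definite_quadratic[OF definite, of "x - xg" "a - g"] by (simp_all add: Q_def)
  define G where "G = ((1 - c * pi) * l * (1 + \<delta>) - g * D) * (a - g)"
  have expansion: "2 * (1 + \<delta>) * (profile x a - Theta \<alpha> l \<delta>) = 2 * G - (1 + \<delta>) * Q"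
    unfolding Q_def G_def profile_expansion by (simp add: mult.assoc)
  have G: "G \<le> 0" unfolding G_def by (rule optimality_gap[OF assms])
  have "0 \<le> (1 + \<delta>) * Q" using Q(1) one_plus_\<delta>_pos by simp
  then have "2 * (1 + \<delta>) * (profile x a - Theta \<alpha> l \<delta>) \<le> 0"
    using expansion G by linarith
  then show "profile x a \<le> Theta \<alpha> l \<delta>" using one_plus_\<delta>_pos by (simp add: mult_le_0_iff)
  show "profile x a = Theta \<alpha> l \<delta> \<longleftrightarrow> x = xg \<and> a = g"
  proof
    assume "profile x a = Theta \<alpha> l \<delta>"
    then have "(1 + \<delta>) * Q \<le> 0" using expansion G by simp
    then have "Q = 0" using Q(1) one_plus_\<delta>_pos by (simp add: mult_le_0_iff)
    then show "x = xg \<and> a = g" by (rule Q(2))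
  next
    assume "x = xg \<and> a = g"
    then show "profile x a = Theta \<alpha> l \<delta>" using expansion one_plus_\<delta>_pos by (simp add: Q_def G_def)
  qed
qed

lemma tent_slope_bounds:
  assumes "x \<in> {-pi..pi}"
  shows "\<bar>1 - c * (pi + x)\<bar> \<le> 1" and "-pi < x \<Longrightarrow> \<bar>1 - c * (pi + x)\<bar> < 1"
proof -
  have "c * (pi + x) \<le> c * (2 * pi)" using assms c_pos by (intro mult_left_mono) auto
  then have "c * (pi + x) < 2" using c_pi_less_1 by simp
  moreover have "0 \<le> c * (pi + x)" using assms c_pos by simp
  ultimately show "\<bar>1 - c * (pi + x)\<bar> \<le> 1" by (simp add: abs_le_iff)
  assume "-pi < x"
  then have "0 < c * (pi + x)" using c_pos by simp
  with \<open>c * (pi + x) < 2\<close> show "\<bar>1 - c * (pi + x)\<bar> < 1" by (simp add: abs_less_iff)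
qed

lemma maximiser_bounds: "0 < xg" "xg \<le> g" "g - xg \<le> l" "0 < g" "g + l \<le> pi"
proof -
  show "0 < g" "g + l \<le> pi" using g_pos g_le by auto
  have xg: "g - xg = g * (\<delta> + c * l) / (1 + \<delta>)"
    using one_plus_\<delta>_pos by (simp add: xg_def field_simps)
  show "0 < xg" using g_pos c_l_less_1 one_plus_\<delta>_pos by (simp add: xg_def)
  have "0 \<le> g * (\<delta> + c * l) / (1 + \<delta>)"
    using g_pos c_pos l_pos \<delta>_nonneg one_plus_\<delta>_pos by simp
  then show "xg \<le> g" using xg by simp
  have "g * D * (\<delta> + c * l) \<le> (1 - c * pi) * l * (1 + \<delta>) * (\<delta> + c * l)"
    using g_D_le c_pos l_pos \<delta>_nonneg by (intro mult_right_mono) auto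
  also have "\<dots> \<le> l * (1 + \<delta>) * D"
  proof -
    have "(1 - c * pi) * (\<delta> + c * l) \<le> \<delta> + c * l"
      using c_pos l_pos \<delta>_nonneg c_pi_less_1 pi_gt_zero by (intro mult_left_le_one_le) auto
    then have "l * (1 + \<delta>) * ((1 - c * pi) * (\<delta> + c * l)) \<le> l * (1 + \<delta>) * D"
      using D_ge l_pos one_plus_\<delta>_pos by (intro mult_left_mono) auto
    then show ?thesis by (simp add: mult_ac)
  qed
  finally have "g * (\<delta> + c * l) \<le> l * (1 + \<delta>)"
    using D_pos by (simp add: mult.commute mult.left_commute)
  then show "g - xg \<le> l" using one_plus_\<delta>_pos by (simp add: xg divide_le_eq)
qed

end

section \<open>The extremal problem\<close>

locale robin_bathtub =
  fixes \<alpha> m M s l \<delta> :: real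
  assumes \<alpha>_pos: "0 < \<alpha>" and m_nonneg: "0 \<le> m" and m_less_s: "m < s" and s_less_M: "s < M"
    and l_eq: "l = pi * (s - m) / (M - m)" and \<delta>_eq: "\<delta> = m / (M - m)"
begin

lemma M_minus_m_pos: "0 < M - m"
  using m_less_s s_less_M by simp

lemma m_eq: "m = (M - m) * \<delta>"
  using M_minus_m_pos by (simp add: \<delta>_eq)

lemma mass_eq: "2 * pi * s = 2 * pi * m + (M - m) * (2 * l)"
  using M_minus_m_pos by (simp add: l_eq field_simps)

sublocale theta_params \<alpha> l \<delta>
proof
  show "0 < l" "l < pi" "0 \<le> \<delta>"
    using M_minus_m_pos m_less_s s_less_M m_nonneg by (simp_all add: l_eq \<delta>_eq field_simps)
qed (rule \<alpha>_pos)

definition "step a = (\<lambda>y. m + (M - m) * indicator {a - l..a + l} y)"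

lemma admissible_integral:
  assumes "admissible m M s f"
  shows "integral\<^sup>L lebesgue_pi f = 2 * pi * s"
proof -
  have "integral\<^sup>L lebesgue_pi f = integral\<^sup>L lebesgue_pi (\<lambda>y. \<bar>f y\<bar>)"
    using assms m_nonneg unfolding admissible_def
    by (intro integral_cong_AE) (auto elim!: eventually_mono)
  then show ?thesis using assms by (simp add: admissible_def)
qed

lemma integral_step: "-pi \<le> a - l \<Longrightarrow> a + l \<le> pi \<Longrightarrow> integral\<^sup>L lebesgue_pi (step a) = 2 * pi * s"
  using l_pos integral_lebesgue_pi_indicator[of "a - l" "a + l"]
    integrable_lebesgue_pi_const integrable_lebesgue_pi_indicator
  by (simp add: step_def measure_lebesgue_pi mass_eq)

lemma integral_tent_step:
  assumes "x \<in> {-pi..pi}" "\<bar>x - a\<bar> \<le> l" "-pi \<le> a - l" "a + l \<le> pi"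
  shows "integral\<^sup>L lebesgue_pi (\<lambda>y. tent x (1 - c * (pi + x)) y * step a y) = (M - m) * profile x a"
proof -
  let ?k = "1 - c * (pi + x)"
  have "integrable lebesgue_pi (tent x ?k)"
    using integrable_continuous_mult[OF integrable_lebesgue_pi_const[of 1] continuous_on_tent] by simp
  moreover have "integrable lebesgue_pi (\<lambda>y. tent x ?k y * indicator {a - l..a + l} y)"
    using integrable_continuous_mult[OF integrable_lebesgue_pi_indicator continuous_on_tent] .
  moreover have "(\<lambda>y. tent x ?k y * step a y)
      = (\<lambda>y. m * tent x ?k y + (M - m) * (tent x ?k y * indicator {a - l..a + l} y))"
    by (simp add: step_def fun_eq_iff algebra_simps)
  ultimately have "integral\<^sup>L lebesgue_pi (\<lambda>y. tent x ?k y * step a y)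
      = m * integral\<^sup>L lebesgue_pi (tent x ?k)
        + (M - m) * integral\<^sup>L lebesgue_pi (\<lambda>y. tent x ?k y * indicator {a - l..a + l} y)"
    by simp
  also have "\<dots> = m * ((pi\<^sup>2 - x\<^sup>2) / 2) + (M - m) * (l * pi - (l\<^sup>2 + (x - a)\<^sup>2) / 2 + ?k * l * a)"
    using assms by (simp add: integral_tent integral_tent_centered)
  also have "\<dots> = (M - m) * profile x a"
    by (subst (1) m_eq) (simp add: profile_def field_simps)
  finally show ?thesis .
qed

lemma rise_le_profile:
  assumes f: "admissible m M s f" and x: "x \<in> {-pi..pi}"
  defines "rise \<equiv> robin_sol \<alpha> f x - robin_sol \<alpha> f (-pi)"
  obtains a where "a \<le> pi - l" and "rise \<le> (M - m) * profile x a"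
    and "rise = (M - m) * profile x a \<Longrightarrow> -pi < x \<Longrightarrow> AE y in lebesgue_pi. f y = step a y"
proof -
  define k where "k = 1 - c * (pi + x)"
  have k: "\<bar>k\<bar> \<le> 1" using tent_slope_bounds(1)[OF x] by (simp add: k_def)
  obtain a t where a: "-pi + l \<le> a" "a \<le> pi - l" "\<bar>x - a\<bar> \<le> l"
    and above: "\<And>y. y \<in> {a - l..a + l} \<Longrightarrow> t \<le> tent x k y"
    and below: "\<And>y. y \<in> {-pi..pi} - {a - l..a + l} \<Longrightarrow> tent x k y \<le> t"
    using tent_superlevel_interval[OF x l_pos l_less_pi k] by blast
  have f_int: "integrable lebesgue_pi f" and f_bounds: "AE y in lebesgue_pi. m \<le> f y \<and> f y \<le> M"
    using f by (simp_all add: admissible_def)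
  have "integral\<^sup>L lebesgue_pi f = integral\<^sup>L lebesgue_pi (step a)"
    using admissible_integral[OF f] integral_step a by simp
  then have mass: "integral\<^sup>L lebesgue_pi f
      = integral\<^sup>L lebesgue_pi (\<lambda>y. m + (M - m) * indicator {a - l..a + l} y)"
    by (simp add: step_def)
  have interval: "{a - l..a + l} \<in> sets lebesgue_pi"
    using a by (simp add: sets_restrict_space_iff)
  note bath = bathtub[OF finite_measure_lebesgue_pi f_int f_bounds interval mass
      borel_measurable_lebesgue_onI[OF borel_measurable_tent] abs_tent_le[OF x] above below]
  have rise: "rise = integral\<^sup>L lebesgue_pi (\<lambda>y. tent x k y * f y)"
    using robin_sol_diff_left[OF f_int x] by (simp add: rise_def k_def)
  have step: "integral\<^sup>L lebesgue_pi (\<lambda>y. tent x k y * step a y) = (M - m) * profile x a"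
    using integral_tent_step[OF x a(3)] a by (simp add: k_def)
  show thesis
  proof (rule that[OF a(2)])
    show "rise \<le> (M - m) * profile x a"
      using bath(1) rise step by (simp add: step_def)
    assume "rise = (M - m) * profile x a" and "-pi < x"
    then have "AE y in lebesgue_pi. tent x k y = t \<or> f y = step a y"
      using bath(2) rise step by (simp add: step_def)
    moreover have "\<bar>k\<bar> < 1" using tent_slope_bounds(2)[OF x \<open>-pi < x\<close>] by (simp add: k_def)
    ultimately show "AE y in lebesgue_pi. f y = step a y"
      using AE_tent_neq[of k x t] by (auto elim: eventually_mono)
  qed
qed

lemma rise_le_Theta:
  assumes f: "admissible m M s f" and x: "x \<in> {-pi..pi}"
  defines "rise \<equiv> robin_sol \<alpha> f x - robin_sol \<alpha> f (-pi)"
  shows "rise \<le> (M - m) * Theta \<alpha> l \<delta>"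
    and "rise = (M - m) * Theta \<alpha> l \<delta> \<Longrightarrow> AE y in lebesgue_pi. f y = step g y"
proof -
  obtain a where a: "a \<le> pi - l" and le: "rise \<le> (M - m) * profile x a"
    and eq: "rise = (M - m) * profile x a \<Longrightarrow> -pi < x \<Longrightarrow> AE y in lebesgue_pi. f y = step a y"
    using rise_le_profile[OF f x] unfolding rise_def by blast
  have "(M - m) * profile x a \<le> (M - m) * Theta \<alpha> l \<delta>"
    using profile_le_Theta(1)[OF a] M_minus_m_pos by simp
  then show "rise \<le> (M - m) * Theta \<alpha> l \<delta>" using le by simp
  assume max: "rise = (M - m) * Theta \<alpha> l \<delta>"
  then have "Theta \<alpha> l \<delta> \<le> profile x a" using le M_minus_m_pos by simp
  then have "profile x a = Theta \<alpha> l \<delta>" using profile_le_Theta(1)[OF a, of x] by linarith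
  then have "x = xg" "a = g" using profile_le_Theta(2)[OF a] by auto
  moreover from this have "-pi < x" using maximiser_bounds(1) pi_gt_zero by linarith
  ultimately show "AE y in lebesgue_pi. f y = step g y"
    using eq max \<open>profile x a = Theta \<alpha> l \<delta>\<close> by simp
qed

lemma rise_at_maximiser:
  assumes f: "admissible m M s f" and f_step: "AE y in lebesgue_pi. f y = step g y"
  shows "robin_sol \<alpha> f xg - robin_sol \<alpha> f (-pi) = (M - m) * Theta \<alpha> l \<delta>"
proof -
  let ?k = "1 - c * (pi + xg)"
  have xg: "xg \<in> {-pi..pi}" "\<bar>xg - g\<bar> \<le> l" "-pi \<le> g - l" "g + l \<le> pi"
    using maximiser_bounds l_less_pi by auto
  have f_int: "integrable lebesgue_pi f" using f by (simp add: admissible_def)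
  have "robin_sol \<alpha> f xg - robin_sol \<alpha> f (-pi) = integral\<^sup>L lebesgue_pi (\<lambda>y. tent xg ?k y * f y)"
    by (rule robin_sol_diff_left[OF f_int xg(1)])
  also have "\<dots> = integral\<^sup>L lebesgue_pi (\<lambda>y. tent xg ?k y * step g y)"
  proof (rule integral_cong_AE)
    show "(\<lambda>y. tent xg ?k y * f y) \<in> borel_measurable lebesgue_pi"
      using integrable_continuous_mult[OF f_int continuous_on_tent] by (rule borel_measurable_integrable)
    show "(\<lambda>y. tent xg ?k y * step g y) \<in> borel_measurable lebesgue_pi"
      unfolding step_def by (intro borel_measurable_lebesgue_onI) measurable
    show "AE y in lebesgue_pi. tent xg ?k y * f y = tent xg ?k y * step g y"
      using f_step by eventually_elim simp
  qed
  also have "\<dots> = (M - m) * profile xg g"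
    using integral_tent_step[OF xg] .
  also have "\<dots> = (M - m) * Theta \<alpha> l \<delta>"
    using profile_le_Theta(2)[OF g_le] by simp
  finally show ?thesis .
qed

lemma endpoint_rises:
  assumes f: "admissible m M s f"
  defines "u \<equiv> robin_sol \<alpha> f" and "R \<equiv> (M - m) * Theta \<alpha> l \<delta>"
  shows "\<forall>x\<in>{-pi..pi}. u x - u (-pi) \<le> R \<and> u x - u pi \<le> R"
    and "(\<exists>x\<in>{-pi..pi}. u x - u (-pi) = R \<or> u x - u pi = R) \<longleftrightarrow>
         (AE y in lebesgue_pi. f y = step g y) \<or> (AE y in lebesgue_pi. f y = step g (- y))"
proof -
  let ?f' = "\<lambda>y. f (- y)"
  let ?v = "robin_sol \<alpha> ?f'"
  have f': "admissible m M s ?f'" using f by (rule admissible_reflect)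
  have right: "u x - u pi = ?v (- x) - ?v (- pi)" for x
    by (simp add: u_def robin_sol_reflect)
  have reflect: "x \<in> {-pi..pi} \<Longrightarrow> - x \<in> {-pi..pi}" for x by auto
  show "\<forall>x\<in>{-pi..pi}. u x - u (-pi) \<le> R \<and> u x - u pi \<le> R"
    unfolding right using rise_le_Theta(1)[OF f] rise_le_Theta(1)[OF f' reflect]
    by (simp add: u_def R_def)
  show "(\<exists>x\<in>{-pi..pi}. u x - u (-pi) = R \<or> u x - u pi = R) \<longleftrightarrow>
      (AE y in lebesgue_pi. f y = step g y) \<or> (AE y in lebesgue_pi. f y = step g (- y))"
  proof
    assume "\<exists>x\<in>{-pi..pi}. u x - u (-pi) = R \<or> u x - u pi = R"
    then obtain x where x: "x \<in> {-pi..pi}" and "u x - u (-pi) = R \<or> ?v (- x) - ?v (- pi) = R"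
      unfolding right by blast
    then show "(AE y in lebesgue_pi. f y = step g y) \<or> (AE y in lebesgue_pi. f y = step g (- y))"
      using rise_le_Theta(2)[OF f x] rise_le_Theta(2)[OF f' reflect[OF x]]
        AE_lebesgue_pi_reflect_iff[of f "step g"]
      unfolding u_def R_def by blast
  next
    have xg: "xg \<in> {-pi..pi}" using maximiser_bounds l_less_pi by auto
    assume "(AE y in lebesgue_pi. f y = step g y) \<or> (AE y in lebesgue_pi. f y = step g (- y))"
    then show "\<exists>x\<in>{-pi..pi}. u x - u (-pi) = R \<or> u x - u pi = R"
    proof
      assume "AE y in lebesgue_pi. f y = step g y"
      then show ?thesis using rise_at_maximiser[OF f] xg unfolding u_def R_def by blast
    next
      assume "AE y in lebesgue_pi. f y = step g (- y)"
      then have "?v xg - ?v (- pi) = R"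
        using rise_at_maximiser[OF f'] AE_lebesgue_pi_reflect_iff[of f "step g"] unfolding R_def by blast
      then have "u (- xg) - u pi = R" by (simp add: right)
      then show ?thesis using reflect[OF xg] by blast
    qed
  qed
qed

end

theorem theorem1:
  fixes \<alpha> m M s :: real and f :: "real \<Rightarrow> real"
  assumes "\<alpha> > 0" and "0 \<le> m" and "m < s" and "s < M"
    and "admissible m M s f"
  defines "l \<equiv> pi * (s - m) / (M - m)"
    and "\<delta> \<equiv> m / (M - m)"
  defines "f0 \<equiv> (\<lambda>x. m + (M - m) * indicator {a_g \<alpha> l \<delta> - l .. a_g \<alpha> l \<delta> + l} x)"
  shows "osc (robin_sol \<alpha> f) \<le> (M - m) * Theta \<alpha> l \<delta> \<and>
         (osc (robin_sol \<alpha> f) = (M - m) * Theta \<alpha> l \<delta> \<longleftrightarrow>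
           ((AE x in lebesgue_on {-pi..pi}. f x = f0 x) \<or>
            (AE x in lebesgue_on {-pi..pi}. f x = f0 (- x))))"
proof -
  interpret robin_bathtub \<alpha> m M s l \<delta>
    using assms(1-4) by unfold_locales (simp_all add: l_def \<delta>_def)
  have f0: "f0 = step g" by (simp add: f0_def step_def g_def)
  have f: "integrable lebesgue_pi f" "AE y in lebesgue_pi. 0 \<le> f y"
    using assms(5) \<open>0 \<le> m\<close> by (auto simp: admissible_def elim: eventually_mono)
  show ?thesis
    using osc_robin_sol_le_iff[OF f \<open>0 < \<alpha>\<close> endpoint_rises(1)[OF assms(5)]]
      endpoint_rises(2)[OF assms(5)] by (simp add: f0)
qed

end
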